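(* Consider an agent-dependent SDP performance estimation problem (PEP) for distributed optimization with $n$ agents, and let $(F,G)$, $F=[f_1^T\dots f_n^T]\in\mathbb{R}^{nq}$, $G=[G_{ij}]_{i,j=1}^n\in\mathbb{R}^{np\times np}$, be any feasible solution. Let $\{\mathcal{V}_1,\dots,\mathcal{V}_U\}$ be the partition of the agent set $\mathcal{V}=\{1,\dots,n\}$ into equivalence classes of agents, with $n_u=|\mathcal{V}_u|$ and $u_i$ the index of the class containing agent $i$. Define $F^s=[(f_1^s)^T\dots(f_n^s)^T]$ and $G^s=[G^s_{ij}]$ by $$f_i^s=\frac{1}{n_{u_i}}\sum_{k\in\mathcal{V}_{u_i}}f_k,\qquad G^s_{ij}=\begin{cases}\frac{1}{n_{u_i}}\sum_{k\in\mathcal{V}_{u_i}}G_{kk}, & i=j,\\[1mm] \frac{1}{n_{u_i}(n_{u_i}-1)}\sum_{k\in\mathcal{V}_{u_i}}\sum_{l\in\mathcal{V}_{u_i},\,l\ne k}G_{kl}, & j\ne i,\ j\in\mathcal{V}_{u_i},\\[1mm] \frac{1}{n_{u_i}n_{u_j}}\sum_{k\in\mathcal{V}_{u_i}}\sum_{l\in\mathcal{V}_{u_j}}G_{kl}, & j\notin\mathcal{V}_{u_i}.\end{cases}$$ Then $(F^s,G^s)$ is a feasible solution of the PEP and $\mathcal{P}(F^s,G^s)=\mathcal{P}(F,G)$.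
   Context: Distributed optimization: $n$ agents with local functions $f_i:\mathbb{R}^d\to\mathbb{R}$ aim to minimize $f(x)=\frac1n\sum_i f_i(x)$ via an algorithm built from local gradient evaluations, consensus steps $y_i=\sum_j w_{ij}x_j$ with averaging matrices from a given class, and linear combinations of each agent's local variables. In the agent-dependent SDP PEP, each agent $i$ holds $p$ vector variables (its iterates, consensus outputs, gradients, and copies of points common to all agents such as the minimizer $x^*$), gathered as the columns of $P_i\in\mathbb{R}^{d\times p}$ in the same order for all agents, and $q$ function values gathered in $f_i\in\mathbb{R}^q$. The variables are $F=[f_1^T\dots f_n^T]$ and the Gram matrix $G=P^TP\succeq0$ with $P=[P_1\dots P_n]$, so $G_{ij}=P_i^TP_j$; the objective $\mathcal{P}(F,G)$ (performance criterion) and all constraints (algorithm constraints, function-class interpolation constraints, initial conditions, optimality condition $\frac1n\sum_i\nabla f_i(x^* )=0$, consensus constraints) are linear constraints or linear matrix inequalities in $(F,G)$, together with $G\succeq0$. Two agents $i,j$ are equivalent if, for every feasible $(F,G)$, the solution obtained by permuting the blocks of agents $i$ and $j$ (in $F$ and in the block rows and columns of $G$) is again feasible and has the same objective value; this is an equivalence relation whose classes partition $\mathcal{V}$. *)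

theory Defs
  imports Complex_Main
begin

text \<open>
Encoding of an agent-dependent SDP PEP with n agents, each holding p vector
variables and q function values.
  F :: nat => real   represents the vector [f_1^T ... f_n^T] in R^{nq};
                     entry a (a<q) of f_i is  F (i*q + a).
  G :: nat => nat => real  represents the np x np Gram matrix;
                     entry (a,b) of block G_ij is  G (i*p + a) (j*p + b).
Agents are numbered 0..n-1.
\<close>

type_synonym lfun = "(nat \<Rightarrow> real) \<times> (nat \<Rightarrow> nat \<Rightarrow> real)"

definition lval :: "nat \<Rightarrow> nat \<Rightarrow> nat \<Rightarrow> lfun \<Rightarrow> (nat \<Rightarrow> real) \<Rightarrow> (nat \<Rightarrow> nat \<Rightarrow> real) \<Rightarrow> real" where
  "lval n p q c F G =
     (\<Sum>k<n*q. fst c k * F k) + (\<Sum>k<n*p. \<Sum>l<n*p. snd c k l * G k l)"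

definition psd :: "nat \<Rightarrow> (nat \<Rightarrow> nat \<Rightarrow> real) \<Rightarrow> bool" where
  "psd N M \<longleftrightarrow> (\<forall>r<N. \<forall>s<N. M r s = M s r) \<and>
                 (\<forall>x :: nat \<Rightarrow> real. 0 \<le> (\<Sum>r<N. \<Sum>s<N. x r * M r s * x s))"

datatype constr =
    LinLe lfun real
  | LinEq lfun real
  | LMI nat "nat \<Rightarrow> nat \<Rightarrow> lfun" "nat \<Rightarrow> nat \<Rightarrow> real"

fun sat :: "nat \<Rightarrow> nat \<Rightarrow> nat \<Rightarrow> constr \<Rightarrow> (nat \<Rightarrow> real) \<Rightarrow> (nat \<Rightarrow> nat \<Rightarrow> real) \<Rightarrow> bool" where
  "sat n p q (LinLe c b) F G = (lval n p q c F G \<le> b)"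
| "sat n p q (LinEq c b) F G = (lval n p q c F G = b)"
| "sat n p q (LMI m A C) F G = psd m (\<lambda>r s. lval n p q (A r s) F G + C r s)"

definition feasible :: "nat \<Rightarrow> nat \<Rightarrow> nat \<Rightarrow> constr list \<Rightarrow> (nat \<Rightarrow> real) \<Rightarrow> (nat \<Rightarrow> nat \<Rightarrow> real) \<Rightarrow> bool" where
  "feasible n p q cs F G \<longleftrightarrow> psd (n*p) G \<and> (\<forall>c\<in>set cs. sat n p q c F G)"

definition swp :: "nat \<Rightarrow> nat \<Rightarrow> nat \<Rightarrow> nat" where
  "swp i j x = (if x = i then j else if x = j then i else x)"

definition swapF :: "nat \<Rightarrow> nat \<Rightarrow> nat \<Rightarrow> (nat \<Rightarrow> real) \<Rightarrow> (nat \<Rightarrow> real)" where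
  "swapF q i j F = (\<lambda>k. F (swp i j (k div q) * q + k mod q))"

definition swapG :: "nat \<Rightarrow> nat \<Rightarrow> nat \<Rightarrow> (nat \<Rightarrow> nat \<Rightarrow> real) \<Rightarrow> (nat \<Rightarrow> nat \<Rightarrow> real)" where
  "swapG p i j G = (\<lambda>k l. G (swp i j (k div p) * p + k mod p) (swp i j (l div p) * p + l mod p))"

definition equiv_agents :: "nat \<Rightarrow> nat \<Rightarrow> nat \<Rightarrow> constr list \<Rightarrow> lfun \<Rightarrow> nat \<Rightarrow> nat \<Rightarrow> bool" where
  "equiv_agents n p q cs obj i j \<longleftrightarrow> i < n \<and> j < n \<and>
     (\<forall>F G. feasible n p q cs F G \<longrightarrow>
        feasible n p q cs (swapF q i j F) (swapG p i j G) \<and>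
        lval n p q obj (swapF q i j F) (swapG p i j G) = lval n p q obj F G)"

definition agent_class :: "nat \<Rightarrow> nat \<Rightarrow> nat \<Rightarrow> constr list \<Rightarrow> lfun \<Rightarrow> nat \<Rightarrow> nat set" where
  "agent_class n p q cs obj i = {k. k < n \<and> equiv_agents n p q cs obj i k}"

definition symF :: "nat \<Rightarrow> nat \<Rightarrow> nat \<Rightarrow> constr list \<Rightarrow> lfun \<Rightarrow> (nat \<Rightarrow> real) \<Rightarrow> (nat \<Rightarrow> real)" where
  "symF n p q cs obj F = (\<lambda>k.
     (let i = k div q; a = k mod q; V = agent_class n p q cs obj i
      in (1 / real (card V)) * (\<Sum>k'\<in>V. F (k' * q + a))))"

definition symG :: "nat \<Rightarrow> nat \<Rightarrow> nat \<Rightarrow> constr list \<Rightarrow> lfun \<Rightarrow> (nat \<Rightarrow> nat \<Rightarrow> real) \<Rightarrow> (nat \<Rightarrow> nat \<Rightarrow> real)" where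
  "symG n p q cs obj G = (\<lambda>k l.
     (let i = k div p; a = k mod p; j = l div p; b = l mod p;
          Vi = agent_class n p q cs obj i; Vj = agent_class n p q cs obj j;
          ni = real (card Vi); nj = real (card Vj)
      in if i = j then (1 / ni) * (\<Sum>k'\<in>Vi. G (k' * p + a) (k' * p + b))
         else if j \<in> Vi then
           (1 / (ni * (ni - 1))) * (\<Sum>k'\<in>Vi. \<Sum>l'\<in>Vi - {k'}. G (k' * p + a) (l' * p + b))
         else (1 / (ni * nj)) * (\<Sum>k'\<in>Vi. \<Sum>l'\<in>Vj. G (k' * p + a) (l' * p + b))))"

end

(* Let T be the permutations of the agents that keep every agent inside its class and map
   feasible solutions to feasible solutions with the same objective value; T is a finite group
   containing the transpositions of equivalent agents. Since the constraints are linear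
   (in)equalities and LMIs and the objective is linear, the average of the relabelled solutions
   over T is again feasible with the same objective value. The group T acts transitively on
   each class and on the ordered pairs of distinct agents from two classes, so as s ranges over
   T the agent s i, and the pair (s i, s j) for i \<noteq> j, are uniformly distributed; this
   makes the average over T exactly (F^s, G^s). *)

theory Submission
  imports Defs "HOL-Combinatorics.Permutations"
begin

lemma lval_cong:
  assumes "\<forall>k<n*q. F k = F' k" "\<forall>k<n*p. \<forall>l<n*p. G k l = G' k l"
  shows "lval n p q c F G = lval n p q c F' G'"
  unfolding lval_def using assms by (intro arg_cong2[where f="(+)"] sum.cong) auto

lemma psd_cong:
  assumes "\<forall>k<N. \<forall>l<N. M k l = M' k l"
  shows "psd N M = psd N M'"
proof -
  have "(\<Sum>r<N. \<Sum>s<N. x r * M r s * x s) = (\<Sum>r<N. \<Sum>s<N. x r * M' r s * x s)" for x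
    using assms by (intro sum.cong) auto
  then show ?thesis unfolding psd_def using assms by auto
qed

lemma feasible_cong:
  assumes "\<forall>k<n*q. F k = F' k" "\<forall>k<n*p. \<forall>l<n*p. G k l = G' k l"
  shows "feasible n p q cs F G = feasible n p q cs F' G'"
proof -
  have "sat n p q c F G = sat n p q c F' G'" for c
    using lval_cong[OF assms] by (cases c) auto
  then show ?thesis unfolding feasible_def using psd_cong[of "n*p" G G'] assms by auto
qed

lemma lval_average:
  assumes "finite T"
  shows "lval n p q c (\<lambda>k. (\<Sum>t\<in>T. Fs t k) / N) (\<lambda>k l. (\<Sum>t\<in>T. Gs t k l) / N)
       = (\<Sum>t\<in>T. lval n p q c (Fs t) (Gs t)) / N"
proof -
  have "(\<Sum>k<n*q. fst c k * ((\<Sum>t\<in>T. Fs t k) / N)) = (\<Sum>t\<in>T. \<Sum>k<n*q. fst c k * Fs t k) / N"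
    by (simp add: sum_divide_distrib sum_distrib_left sum.swap[of _ T])
  moreover have "(\<Sum>k<n*p. \<Sum>l<n*p. snd c k l * ((\<Sum>t\<in>T. Gs t k l) / N))
      = (\<Sum>k<n*p. \<Sum>t\<in>T. \<Sum>l<n*p. snd c k l * Gs t k l / N)"
    by (simp add: sum_divide_distrib sum_distrib_left sum.swap[of _ T])
  moreover have "\<dots> = (\<Sum>t\<in>T. \<Sum>k<n*p. \<Sum>l<n*p. snd c k l * Gs t k l) / N"
    by (subst sum.swap) (simp add: sum_divide_distrib)
  ultimately show ?thesis
    unfolding lval_def by (simp add: sum.distrib add_divide_distrib)
qed

lemma psd_average:
  assumes "finite T" and "\<forall>t\<in>T. psd m (M t)"
  shows "psd m (\<lambda>r s. (\<Sum>t\<in>T. M t r s) / card T)"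
  unfolding psd_def
proof (intro conjI allI impI)
  fix r s assume "r < m" "s < m"
  then show "(\<Sum>t\<in>T. M t r s) / card T = (\<Sum>t\<in>T. M t s r) / card T"
    using assms(2) unfolding psd_def by (metis (no_types, lifting) sum.cong)
next
  fix x :: "nat \<Rightarrow> real"
  have "(\<Sum>r<m. \<Sum>s<m. x r * ((\<Sum>t\<in>T. M t r s) / card T) * x s)
      = (\<Sum>r<m. \<Sum>t\<in>T. \<Sum>s<m. x r * M t r s * x s / card T)"
    by (simp add: sum_divide_distrib sum_distrib_left sum_distrib_right sum.swap[of _ T] mult.assoc)
  also have "\<dots> = (\<Sum>t\<in>T. (\<Sum>r<m. \<Sum>s<m. x r * M t r s * x s) / card T)"
    by (subst sum.swap) (simp add: sum_divide_distrib)
  also have "\<dots> \<ge> 0"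
    using assms(2) unfolding psd_def by (intro sum_nonneg[of T] divide_nonneg_nonneg) auto
  finally show "0 \<le> (\<Sum>r<m. \<Sum>s<m. x r * ((\<Sum>t\<in>T. M t r s) / card T) * x s)" .
qed

lemma feasible_average:
  assumes fin: "finite T" and "T \<noteq> {}" and feas: "\<forall>t\<in>T. feasible n p q cs (Fs t) (Gs t)"
  shows "feasible n p q cs (\<lambda>k. (\<Sum>t\<in>T. Fs t k) / card T) (\<lambda>k l. (\<Sum>t\<in>T. Gs t k l) / card T)"
  unfolding feasible_def
proof (intro conjI ballI)
  show "psd (n*p) (\<lambda>k l. (\<Sum>t\<in>T. Gs t k l) / card T)"
    using psd_average[OF fin] feas unfolding feasible_def by blast
next
  fix c assume "c \<in> set cs"
  then have sat: "\<forall>t\<in>T. sat n p q c (Fs t) (Gs t)" using feas unfolding feasible_def by blast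
  have card_pos: "real (card T) > 0" using assms by (simp add: card_gt_0_iff)
  show "sat n p q c (\<lambda>k. (\<Sum>t\<in>T. Fs t k) / card T) (\<lambda>k l. (\<Sum>t\<in>T. Gs t k l) / card T)"
  proof (cases c)
    case (LinLe a b)
    have "(\<Sum>t\<in>T. lval n p q a (Fs t) (Gs t)) \<le> (\<Sum>t\<in>T. b)"
      using sat LinLe by (intro sum_mono) auto
    then show ?thesis using LinLe card_pos by (simp add: lval_average[OF fin] divide_le_eq mult.commute)
  next
    case (LinEq a b)
    have "(\<Sum>t\<in>T. lval n p q a (Fs t) (Gs t)) = (\<Sum>t\<in>T. b)"
      using sat LinEq by (intro sum.cong) auto
    then show ?thesis using LinEq card_pos by (simp add: lval_average[OF fin])
  next
    case (LMI m A C)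
    have "(\<lambda>r s. lval n p q (A r s) (\<lambda>k. (\<Sum>t\<in>T. Fs t k) / card T) (\<lambda>k l. (\<Sum>t\<in>T. Gs t k l) / card T) + C r s)
       = (\<lambda>r s. (\<Sum>t\<in>T. lval n p q (A r s) (Fs t) (Gs t) + C r s) / card T)"
      using card_pos by (simp add: lval_average[OF fin] sum.distrib add_divide_distrib)
    moreover have "psd m (\<lambda>r s. (\<Sum>t\<in>T. lval n p q (A r s) (Fs t) (Gs t) + C r s) / card T)"
      using sat LMI by (intro psd_average[OF fin]) auto
    ultimately show ?thesis using LMI by simp
  qed
qed

lemma average_over_image:
  fixes f :: "'a \<Rightarrow> 'b" and g :: "'b \<Rightarrow> real"
  assumes fin: "finite T"
    and fibers: "\<And>y y'. y \<in> f ` T \<Longrightarrow> y' \<in> f ` T \<Longrightarrow> card {t\<in>T. f t = y} \<le> card {t\<in>T. f t = y'}"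
  shows "(\<Sum>t\<in>T. g (f t)) / card T = (\<Sum>y\<in>f ` T. g y) / card (f ` T)"
proof (cases "T = {}")
  case False
  then obtain y0 where y0: "y0 \<in> f ` T" by auto
  define c where "c = card {t\<in>T. f t = y0}"
  have card_fiber: "card {t\<in>T. f t = y} = c" if "y \<in> f ` T" for y
    using fibers[OF that y0] fibers[OF y0 that] unfolding c_def by simp
  have "(\<Sum>t\<in>T. g (f t)) = (\<Sum>y\<in>f ` T. \<Sum>t\<in>{t\<in>T. f t = y}. g (f t))"
    by (rule sum.image_gen[OF fin])
  also have "\<dots> = (\<Sum>y\<in>f ` T. real c * g y)"
    by (rule sum.cong) (auto simp: card_fiber)
  finally have sum_eq: "(\<Sum>t\<in>T. g (f t)) = real c * (\<Sum>y\<in>f ` T. g y)"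
    by (simp add: sum_distrib_left)
  have "card T = (\<Sum>y\<in>f ` T. card {t\<in>T. f t = y})"
    using sum.image_gen[OF fin, of "\<lambda>_. 1::nat" f] by simp
  also have "\<dots> = c * card (f ` T)" by (simp add: card_fiber)
  finally have "card T = c * card (f ` T)" .
  moreover have "card T > 0" using fin False by (simp add: card_gt_0_iff)
  ultimately show ?thesis using sum_eq by (simp add: field_simps)
qed simp

text \<open>Composing with r maps the fiber over y injectively into the fiber over act r y,
  so all fibers have the same size.\<close>
lemma average_over_transitive_image:
  fixes T :: "('a \<Rightarrow> 'a) set" and f :: "('a \<Rightarrow> 'a) \<Rightarrow> 'b" and g :: "'b \<Rightarrow> real"
  assumes fin: "finite T" and inj: "\<And>r. r \<in> T \<Longrightarrow> inj r"
    and comp: "\<And>r t. r \<in> T \<Longrightarrow> t \<in> T \<Longrightarrow> r \<circ> t \<in> T"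
    and equivariant: "\<And>r t. f (r \<circ> t) = act r (f t)"
    and transitive: "\<And>y y'. y \<in> f ` T \<Longrightarrow> y' \<in> f ` T \<Longrightarrow> \<exists>r\<in>T. act r y = y'"
  shows "(\<Sum>t\<in>T. g (f t)) / card T = (\<Sum>y\<in>f ` T. g y) / card (f ` T)"
proof (rule average_over_image[OF fin])
  fix y y' assume "y \<in> f ` T" "y' \<in> f ` T"
  then obtain r where r: "r \<in> T" "act r y = y'" using transitive by blast
  show "card {t\<in>T. f t = y} \<le> card {t\<in>T. f t = y'}"
  proof (rule card_inj_on_le[of "(\<circ>) r"])
    show "inj_on ((\<circ>) r) {t\<in>T. f t = y}"
      using inj[OF r(1)] by (auto simp: inj_on_def fun_eq_iff dest: injD)
    show "(\<circ>) r ` {t\<in>T. f t = y} \<subseteq> {t\<in>T. f t = y'}"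
      using comp r equivariant by auto
  qed (use fin in simp)
qed

lemma card_distinct_pairs:
  assumes "finite V"
  shows "real (card (Sigma V (\<lambda>k. V - {k}))) = real (card V) * (real (card V) - 1)"
proof (cases "V = {}")
  case False
  then have "card V \<ge> 1" using assms by (simp add: Suc_le_eq card_gt_0_iff)
  moreover have "card (Sigma V (\<lambda>k. V - {k})) = card V * (card V - 1)"
    using assms by (simp add: card_SigmaI card_Diff_singleton)
  ultimately show ?thesis by (simp add: of_nat_diff)
qed simp

definition relabelF :: "nat \<Rightarrow> (nat \<Rightarrow> nat) \<Rightarrow> (nat \<Rightarrow> real) \<Rightarrow> nat \<Rightarrow> real" where
  "relabelF q s F = (\<lambda>k. F (s (k div q) * q + k mod q))"

definition relabelG :: "nat \<Rightarrow> (nat \<Rightarrow> nat) \<Rightarrow> (nat \<Rightarrow> nat \<Rightarrow> real) \<Rightarrow> nat \<Rightarrow> nat \<Rightarrow> real" where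
  "relabelG p s G = (\<lambda>k l. G (s (k div p) * p + k mod p) (s (l div p) * p + l mod p))"

lemma relabelF_id: "relabelF q id F = F"
  by (simp add: relabelF_def)

lemma relabelG_id: "relabelG p id G = G"
  by (simp add: relabelG_def)

lemma relabelF_comp: "relabelF q (t \<circ> s) F = relabelF q s (relabelF q t F)"
  by (cases "q = 0") (simp_all add: relabelF_def)

lemma relabelG_comp: "relabelG p (t \<circ> s) G = relabelG p s (relabelG p t G)"
  by (cases "p = 0") (simp_all add: relabelG_def)

lemma swapF_eq_relabelF: "swapF q i j = relabelF q (transpose i j)"
  by (simp add: fun_eq_iff swapF_def relabelF_def swp_def transpose_def)

lemma swapG_eq_relabelG: "swapG p i j = relabelG p (transpose i j)"
  by (simp add: fun_eq_iff swapG_def relabelG_def swp_def transpose_def)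

context
  fixes n p q :: nat and cs :: "constr list" and obj :: lfun
begin

definition symmetry :: "(nat \<Rightarrow> nat) \<Rightarrow> bool" where
  "symmetry s \<longleftrightarrow> (\<forall>F G. feasible n p q cs F G \<longrightarrow>
      feasible n p q cs (relabelF q s F) (relabelG p s G) \<and>
      lval n p q obj (relabelF q s F) (relabelG p s G) = lval n p q obj F G)"

lemma symmetry_id: "symmetry id"
  by (simp add: symmetry_def relabelF_id relabelG_id)

lemma symmetry_comp: "symmetry t \<Longrightarrow> symmetry s \<Longrightarrow> symmetry (t \<circ> s)"
  unfolding symmetry_def relabelF_comp relabelG_comp by metis

abbreviation eqv :: "nat \<Rightarrow> nat \<Rightarrow> bool" where
  "eqv \<equiv> equiv_agents n p q cs obj"

abbreviation cls :: "nat \<Rightarrow> nat set" where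
  "cls \<equiv> agent_class n p q cs obj"

lemma equiv_agents_iff_symmetry: "eqv i j \<longleftrightarrow> i < n \<and> j < n \<and> symmetry (transpose i j)"
  by (simp add: equiv_agents_def symmetry_def swapF_eq_relabelF swapG_eq_relabelG)

lemma equiv_agents_less: "eqv i j \<Longrightarrow> i < n" "eqv i j \<Longrightarrow> j < n"
  by (simp_all add: equiv_agents_iff_symmetry)

lemma equiv_agents_refl: "i < n \<Longrightarrow> eqv i i"
  by (simp add: equiv_agents_iff_symmetry symmetry_id)

lemma equiv_agents_sym: "eqv i j \<Longrightarrow> eqv j i"
  by (simp add: equiv_agents_iff_symmetry transpose_commute)

lemma equiv_agents_trans:
  assumes "eqv i j" "eqv j k"
  shows "eqv i k"
proof (cases "i = k \<or> i = j \<or> j = k")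
  case True
  then show ?thesis using assms equiv_agents_refl equiv_agents_less by metis
next
  case False
  then have "transpose i k = transpose i j \<circ> transpose j k \<circ> transpose i j"
    by (simp add: transpose_comp_triple)
  then have "symmetry (transpose i k)"
    using assms by (simp add: equiv_agents_iff_symmetry symmetry_comp)
  then show ?thesis using assms by (simp add: equiv_agents_iff_symmetry)
qed

lemma agent_class_eq: "cls i = {k. eqv i k}"
  unfolding agent_class_def using equiv_agents_less by blast

lemma agent_class_cong: "eqv i j \<Longrightarrow> cls j = cls i"
  unfolding agent_class_eq using equiv_agents_sym equiv_agents_trans by blast

text \<open>Requiring each element to be a symmetry, not only class-preserving, spares us
  the factorisation of class-preserving permutations into transpositions.\<close>
definition class_perms :: "(nat \<Rightarrow> nat) set" where
  "class_perms = {s. s permutes {..<n} \<and> symmetry s \<and> (\<forall>x<n. eqv x (s x))}"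

lemma finite_class_perms: "finite class_perms"
  unfolding class_perms_def
  by (rule finite_subset[OF _ finite_permutations[of "{..<n}"]]) auto

lemma id_in_class_perms: "id \<in> class_perms"
  by (simp add: class_perms_def permutes_id symmetry_id equiv_agents_refl)

lemma class_perms_comp: "r \<in> class_perms \<Longrightarrow> s \<in> class_perms \<Longrightarrow> r \<circ> s \<in> class_perms"
  unfolding class_perms_def
  by (auto intro: permutes_compose symmetry_comp equiv_agents_trans dest: equiv_agents_less)

lemma transpose_in_class_perms:
  assumes "eqv i j"
  shows "transpose i j \<in> class_perms"
proof -
  have "eqv x (transpose i j x)" if "x < n" for x
    using assms that equiv_agents_refl equiv_agents_sym by (auto simp: transpose_def)
  moreover have "transpose i j permutes {..<n}"
    using assms by (intro permutes_swap_id) (auto dest: equiv_agents_less)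
  ultimately show ?thesis
    using assms by (simp add: class_perms_def equiv_agents_iff_symmetry)
qed

lemma class_perms_inj: "s \<in> class_perms \<Longrightarrow> inj s"
  unfolding class_perms_def using permutes_inj by blast

lemma class_perms_equiv: "s \<in> class_perms \<Longrightarrow> i < n \<Longrightarrow> eqv i (s i)"
  by (simp add: class_perms_def)

lemma class_perms_move_pair:
  assumes "eqv k k'" "eqv l l'" "k \<noteq> l" "k' \<noteq> l'"
  shows "\<exists>r\<in>class_perms. r k = k' \<and> r l = l'"
proof -
  define m where "m = transpose k k' l"
  \<comment> \<open>after moving k to k', the transposition of m and l' carries l to l' and fixes k'\<close>
  have kk': "transpose k k' \<in> class_perms" using assms(1) by (rule transpose_in_class_perms)
  then have "eqv l m"
    unfolding m_def using assms(2) by (intro class_perms_equiv equiv_agents_less)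
  then have l'm: "transpose l' m \<in> class_perms"
    using assms(2) by (intro transpose_in_class_perms) (meson equiv_agents_sym equiv_agents_trans)
  have "m \<noteq> k'" unfolding m_def using assms(3) by (auto simp: transpose_eq_iff)
  then show ?thesis
    using class_perms_comp[OF l'm kk'] assms(4)
    by (intro bexI[of _ "transpose l' m \<circ> transpose k k'"]) (auto simp: m_def)
qed

lemma image_class_perms_agent:
  assumes "i < n"
  shows "(\<lambda>s. s i) ` class_perms = cls i"
proof
  show "(\<lambda>s. s i) ` class_perms \<subseteq> cls i"
    using class_perms_equiv assms by (auto simp: agent_class_eq)
  show "cls i \<subseteq> (\<lambda>s. s i) ` class_perms"
  proof
    fix k assume "k \<in> cls i"
    then have "transpose i k \<in> class_perms"
      by (simp add: agent_class_eq transpose_in_class_perms)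
    then show "k \<in> (\<lambda>s. s i) ` class_perms"
      by (intro image_eqI[where x = "transpose i k"]) simp_all
  qed
qed

lemma image_class_perms_pair:
  assumes "i < n" "j < n" "i \<noteq> j"
  shows "(\<lambda>s. (s i, s j)) ` class_perms = {(k, l). k \<in> cls i \<and> l \<in> cls j \<and> k \<noteq> l}"
proof
  show "(\<lambda>s. (s i, s j)) ` class_perms \<subseteq> {(k, l). k \<in> cls i \<and> l \<in> cls j \<and> k \<noteq> l}"
    using assms class_perms_equiv class_perms_inj by (auto simp: agent_class_eq dest: injD)
  show "{(k, l). k \<in> cls i \<and> l \<in> cls j \<and> k \<noteq> l} \<subseteq> (\<lambda>s. (s i, s j)) ` class_perms"
  proof clarify
    fix k l assume "k \<in> cls i" "l \<in> cls j" "k \<noteq> l"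
    then obtain r where "r \<in> class_perms" "r i = k" "r j = l"
      using class_perms_move_pair[of i k j l] assms(3) by (auto simp: agent_class_eq)
    then show "(k, l) \<in> (\<lambda>s. (s i, s j)) ` class_perms" by force
  qed
qed

lemma average_class_perms_agent:
  assumes "i < n"
  shows "(\<Sum>s\<in>class_perms. g (s i)) / card class_perms = (\<Sum>k\<in>cls i. g k) / card (cls i)"
proof -
  have "(\<Sum>s\<in>class_perms. g (s i)) / card class_perms
      = (\<Sum>k\<in>(\<lambda>s. s i) ` class_perms. g k) / card ((\<lambda>s. s i) ` class_perms)"
  proof (rule average_over_transitive_image[where act = "\<lambda>r. r"])
    fix k k' assume "k \<in> (\<lambda>s. s i) ` class_perms" "k' \<in> (\<lambda>s. s i) ` class_perms"
    then have "eqv k k'"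
      using assms image_class_perms_agent agent_class_eq
      by (metis equiv_agents_sym equiv_agents_trans mem_Collect_eq)
    then show "\<exists>r\<in>class_perms. r k = k'"
      by (intro bexI[where x = "transpose k k'"] transpose_in_class_perms) simp_all
  qed (auto simp: finite_class_perms class_perms_inj class_perms_comp)
  then show ?thesis by (simp add: image_class_perms_agent assms)
qed

lemma average_class_perms_pair:
  assumes "i < n" "j < n" "i \<noteq> j"
  defines "P \<equiv> {(k, l). k \<in> cls i \<and> l \<in> cls j \<and> k \<noteq> l}"
  shows "(\<Sum>s\<in>class_perms. g (s i) (s j)) / card class_perms = (\<Sum>(k, l)\<in>P. g k l) / card P"
proof -
  have "(\<Sum>s\<in>class_perms. case_prod g (s i, s j)) / card class_perms
      = (\<Sum>y\<in>(\<lambda>s. (s i, s j)) ` class_perms. case_prod g y) / card ((\<lambda>s. (s i, s j)) ` class_perms)"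
  proof (rule average_over_transitive_image[where act = "\<lambda>r (k, l). (r k, r l)"])
    fix y y' assume "y \<in> (\<lambda>s. (s i, s j)) ` class_perms" "y' \<in> (\<lambda>s. (s i, s j)) ` class_perms"
    then obtain k l k' l' where y: "y = (k, l)" "y' = (k', l')"
      and "k \<in> cls i" "l \<in> cls j" "k \<noteq> l" "k' \<in> cls i" "l' \<in> cls j" "k' \<noteq> l'"
      using image_class_perms_pair[OF assms(1-3)] by auto
    then obtain r where "r \<in> class_perms" "r k = k'" "r l = l'"
      using class_perms_move_pair[of k k' l l'] unfolding agent_class_eq
      by (metis equiv_agents_sym equiv_agents_trans mem_Collect_eq)
    then show "\<exists>r\<in>class_perms. (case y of (k, l) \<Rightarrow> (r k, r l)) = y'"
      using y by auto
  qed (auto simp: finite_class_perms class_perms_inj class_perms_comp)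
  then show ?thesis by (simp add: image_class_perms_pair assms P_def)
qed

lemma distinct_pairs_same_class:
  assumes "eqv i j"
  shows "{(k, l). k \<in> cls i \<and> l \<in> cls j \<and> k \<noteq> l} = Sigma (cls i) (\<lambda>k. cls i - {k})"
  using agent_class_cong[OF assms] by auto

lemma distinct_pairs_other_class:
  assumes "\<not> eqv i j"
  shows "{(k, l). k \<in> cls i \<and> l \<in> cls j \<and> k \<noteq> l} = cls i \<times> cls j"
  using assms unfolding agent_class_eq by (auto dest: equiv_agents_sym equiv_agents_trans)

lemma finite_agent_class: "finite (cls i)"
  unfolding agent_class_def by simp

lemma symF_eq_average:
  assumes "k < n * q"
  shows "symF n p q cs obj F k
       = (\<Sum>s\<in>class_perms. relabelF q s F k) / card class_perms"
proof -
  have "k div q < n" using assms by (simp add: less_mult_imp_div_less)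
  then show ?thesis
    using average_class_perms_agent[where g = "\<lambda>y. F (y * q + k mod q)"]
    by (simp add: symF_def relabelF_def Let_def)
qed

lemma symG_eq_average:
  assumes "k < n * p" "l < n * p"
  shows "symG n p q cs obj G k l
       = (\<Sum>s\<in>class_perms. relabelG p s G k l) / card class_perms"
proof -
  define i a j b where "i = k div p" "a = k mod p" "j = l div p" "b = l mod p"
  define V W T where "V = cls i" "W = cls j" "T = class_perms"
  have "i < n" "j < n" using assms by (simp_all add: i_a_j_b_def less_mult_imp_div_less)
  have "finite V" "finite W" by (simp_all add: V_W_T_def finite_agent_class)
  have relabel: "relabelG p s G k l = G (s i * p + a) (s j * p + b)" for s
    by (simp add: relabelG_def i_a_j_b_def)
  consider "i = j" | "i \<noteq> j" "eqv i j" | "\<not> eqv i j"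
    using \<open>i < n\<close> equiv_agents_refl by blast
  then show ?thesis
  proof cases
    case 1
    then show ?thesis
      using average_class_perms_agent[OF \<open>i < n\<close>, where g = "\<lambda>y. G (y * p + a) (y * p + b)"]
      by (simp add: symG_def Let_def relabel V_W_T_def flip: i_a_j_b_def)
  next
    case 2
    then have "j \<in> V" by (simp add: V_W_T_def agent_class_def equiv_agents_less)
    have "(\<Sum>s\<in>T. relabelG p s G k l) / card T
        = (\<Sum>(k', l')\<in>Sigma V (\<lambda>k'. V - {k'}). G (k' * p + a) (l' * p + b))
          / card (Sigma V (\<lambda>k'. V - {k'}))"
      using average_class_perms_pair[OF \<open>i < n\<close> \<open>j < n\<close> \<open>i \<noteq> j\<close>]
        distinct_pairs_same_class[OF 2(2)]
      by (simp add: relabel V_W_T_def)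
    also have "\<dots> = (\<Sum>k'\<in>V. \<Sum>l'\<in>V - {k'}. G (k' * p + a) (l' * p + b))
          / (real (card V) * (real (card V) - 1))"
      unfolding card_distinct_pairs[OF \<open>finite V\<close>] using \<open>finite V\<close> by (simp add: sum.Sigma)
    finally show ?thesis
      using 2 \<open>j \<in> V\<close> by (simp add: symG_def Let_def V_W_T_def flip: i_a_j_b_def)
  next
    case 3
    then have "i \<noteq> j" "j \<notin> V"
      using \<open>i < n\<close> equiv_agents_refl by (auto simp: V_W_T_def agent_class_def)
    moreover have "(\<Sum>s\<in>T. relabelG p s G k l) / card T
        = (\<Sum>k'\<in>V. \<Sum>l'\<in>W. G (k' * p + a) (l' * p + b)) / (card V * card W)"
      using average_class_perms_pair[OF \<open>i < n\<close> \<open>j < n\<close> \<open>i \<noteq> j\<close>]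
        distinct_pairs_other_class[OF 3]
      by (simp add: relabel V_W_T_def sum.cartesian_product card_cartesian_product)
    ultimately show ?thesis
      by (simp add: symG_def Let_def V_W_T_def flip: i_a_j_b_def)
  qed
qed

end

theorem proposition4:
  fixes n p q :: nat and cs :: "constr list" and obj :: lfun
    and F :: "nat \<Rightarrow> real" and G :: "nat \<Rightarrow> nat \<Rightarrow> real"
  assumes "feasible n p q cs F G"
  shows "feasible n p q cs (symF n p q cs obj F) (symG n p q cs obj G) \<and>
         lval n p q obj (symF n p q cs obj F) (symG n p q cs obj G) = lval n p q obj F G"
proof -
  let ?T = "class_perms n p q cs obj"
  define Fa where "Fa = (\<lambda>k. (\<Sum>s\<in>?T. relabelF q s F k) / card ?T)"
  define Ga where "Ga = (\<lambda>k l. (\<Sum>s\<in>?T. relabelG p s G k l) / card ?T)"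
  have fin: "finite ?T" and ne: "?T \<noteq> {}"
    using finite_class_perms id_in_class_perms by blast+
  have sym: "feasible n p q cs (relabelF q s F) (relabelG p s G) \<and>
      lval n p q obj (relabelF q s F) (relabelG p s G) = lval n p q obj F G" if "s \<in> ?T" for s
    using that assms by (simp add: class_perms_def symmetry_def)
  have F_eq: "\<forall>k<n*q. symF n p q cs obj F k = Fa k"
    by (simp add: Fa_def symF_eq_average)
  have G_eq: "\<forall>k<n*p. \<forall>l<n*p. symG n p q cs obj G k l = Ga k l"
    by (simp add: Ga_def symG_eq_average)
  have "feasible n p q cs Fa Ga"
    unfolding Fa_def Ga_def using sym by (intro feasible_average[OF fin ne]) blast
  moreover have "lval n p q obj Fa Ga = (\<Sum>s\<in>?T. lval n p q obj F G) / card ?T"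
    unfolding Fa_def Ga_def lval_average[OF fin] using sym by (simp cong: sum.cong)
  ultimately show ?thesis
    using feasible_cong[OF F_eq G_eq] lval_cong[OF F_eq G_eq] fin ne by (simp add: card_gt_0_iff)
qed

end
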